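(* Let $T$ be a Sarason-Toeplitz operator on $H^2(\mathbb{T})$. Then the adjoint $T^*$ is also a Sarason-Toeplitz operator.
   Context: $H^2=H^2(\mathbb{T})$ is the Hardy space, viewed as the closed subspace of $L^2(\mathbb{T})$ spanned by $\{e^{in\theta}\}_{n\ge 0}$ (equivalently, analytic functions on the unit disc with square-summable Taylor coefficients), and $S=M_z$ is the shift operator $Sf=zf$. A Sarason-Toeplitz operator is a closed, densely defined (linear) operator $T$ on $H^2$ with domain $D(T)$ such that: (1) $D(T)$ is $S$-invariant, i.e. $zf\in D(T)$ whenever $f\in D(T)$; (2) $S^*TS=T$, i.e. $S^*T(zf)=Tf$ for all $f\in D(T)$; (3) if $f\in D(T)$ and $f(0)=0$, then $S^*f\in D(T)$. *)

theory Defs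
  imports "HOL-Analysis.Analysis"
begin

text \<open>H^2 is modelled by its (unitarily equivalent) coefficient space:
  f in H^2 is identified with its Taylor coefficient sequence (f n)_{n>=0},
  square summable. The shift S = M_z acts as the right shift of coefficients.\<close>

type_synonym h2 = "nat \<Rightarrow> complex"

definition H2 :: "h2 set" where
  "H2 = {f. summable (\<lambda>n. (cmod (f n))\<^sup>2)}"

definition h2_norm :: "h2 \<Rightarrow> real" where
  "h2_norm f = sqrt (\<Sum>n. (cmod (f n))\<^sup>2)"

definition h2_inner :: "h2 \<Rightarrow> h2 \<Rightarrow> complex" where
  "h2_inner f g = (\<Sum>n. f n * cnj (g n))"

definition shift :: "h2 \<Rightarrow> h2" where
  "shift f = (\<lambda>n. case n of 0 \<Rightarrow> 0 | Suc m \<Rightarrow> f m)"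

definition backshift :: "h2 \<Rightarrow> h2" where
  "backshift f = (\<lambda>n. f (Suc n))"

text \<open>An operator is given by its domain D and a map T (only relevant on D).\<close>
definition linear_operator :: "h2 set \<Rightarrow> (h2 \<Rightarrow> h2) \<Rightarrow> bool" where
  "linear_operator D T \<longleftrightarrow>
     D \<subseteq> H2 \<and> (\<lambda>n. 0) \<in> D \<and>
     (\<forall>f\<in>D. \<forall>g\<in>D. (\<lambda>n. f n + g n) \<in> D) \<and>
     (\<forall>c. \<forall>f\<in>D. (\<lambda>n. c * f n) \<in> D) \<and>
     (\<forall>f\<in>D. T f \<in> H2) \<and>
     (\<forall>f\<in>D. \<forall>g\<in>D. T (\<lambda>n. f n + g n) = (\<lambda>n. T f n + T g n)) \<and>
     (\<forall>c. \<forall>f\<in>D. T (\<lambda>n. c * f n) = (\<lambda>n. c * T f n))"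

definition densely_defined :: "h2 set \<Rightarrow> bool" where
  "densely_defined D \<longleftrightarrow>
     (\<forall>f\<in>H2. \<forall>e>0. \<exists>g\<in>D. h2_norm (\<lambda>n. f n - g n) < e)"

definition h2_tendsto :: "(nat \<Rightarrow> h2) \<Rightarrow> h2 \<Rightarrow> bool" where
  "h2_tendsto fs f \<longleftrightarrow> (\<lambda>k. h2_norm (\<lambda>n. fs k n - f n)) \<longlonglongrightarrow> 0"

text \<open>Closed graph (in H^2 x H^2), expressed sequentially (H^2 is a metric space).\<close>
definition closed_operator :: "h2 set \<Rightarrow> (h2 \<Rightarrow> h2) \<Rightarrow> bool" where
  "closed_operator D T \<longleftrightarrow>
     (\<forall>fs f g. (\<forall>k. fs k \<in> D) \<longrightarrow> f \<in> H2 \<longrightarrow> g \<in> H2 \<longrightarrow>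
        h2_tendsto fs f \<longrightarrow> h2_tendsto (\<lambda>k. T (fs k)) g \<longrightarrow> f \<in> D \<and> T f = g)"

definition sarason_toeplitz :: "h2 set \<Rightarrow> (h2 \<Rightarrow> h2) \<Rightarrow> bool" where
  "sarason_toeplitz D T \<longleftrightarrow>
     linear_operator D T \<and> densely_defined D \<and> closed_operator D T \<and>
     (\<forall>f\<in>D. shift f \<in> D) \<and>
     (\<forall>f\<in>D. backshift (T (shift f)) = T f) \<and>
     (\<forall>f\<in>D. f 0 = 0 \<longrightarrow> backshift f \<in> D)"

definition adj_dom :: "h2 set \<Rightarrow> (h2 \<Rightarrow> h2) \<Rightarrow> h2 set" where
  "adj_dom D T = {g\<in>H2. \<exists>h\<in>H2. \<forall>f\<in>D. h2_inner (T f) g = h2_inner f h}"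

definition adj :: "h2 set \<Rightarrow> (h2 \<Rightarrow> h2) \<Rightarrow> h2 \<Rightarrow> h2" where
  "adj D T g = (THE h. h \<in> H2 \<and> (\<forall>f\<in>D. h2_inner (T f) g = h2_inner f h))"

end

theory Submission
  imports Defs
begin

(* The adjoint of a densely defined operator is closed, and von Neumann's argument (project
   (0, w) onto the closed graph of T) shows that the adjoint of a closed densely defined operator
   is densely defined; for this H2 is turned into the real Hilbert space l2, where the
   projection theorem is available.
   The Toeplitz conditions pass to T*.  Invariance of its domain under S* follows from
   S* T S = T.  For invariance under S, the functionals f |-> <T f, S g> and f |-> <f, S (T* g)>
   agree on the codimension-one subspace {f in D. f 0 = 0} = S D, so T* (S g) differs from
   S (T* g) only in the constant coefficient, and hence S* T* S g = T* g. *)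

section \<open>Square-summable coefficient sequences\<close>

lemma H2_zero [simp]: "(\<lambda>n. 0) \<in> H2"
  by (simp add: H2_def)

lemma H2_add:
  assumes "f \<in> H2" "g \<in> H2"
  shows "(\<lambda>n. f n + g n) \<in> H2"
proof -
  have "(cmod (f n + g n))\<^sup>2 \<le> 2 * (cmod (f n))\<^sup>2 + 2 * (cmod (g n))\<^sup>2" for n
  proof -
    have "(cmod (f n + g n))\<^sup>2 \<le> (cmod (f n) + cmod (g n))\<^sup>2"
      by (intro power_mono norm_triangle_ineq) auto
    also have "\<dots> \<le> 2 * (cmod (f n))\<^sup>2 + 2 * (cmod (g n))\<^sup>2"
      using sum_squares_bound[of "cmod (f n)" "cmod (g n)"] unfolding power2_sum by linarith
    finally show ?thesis .
  qed
  moreover have "summable (\<lambda>n. 2 * (cmod (f n))\<^sup>2 + 2 * (cmod (g n))\<^sup>2)"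
    using assms by (auto simp: H2_def intro!: summable_add summable_mult)
  ultimately show ?thesis
    unfolding H2_def by (auto intro: summable_comparison_test'[where N = 0])
qed

lemma H2_scale:
  assumes "f \<in> H2"
  shows "(\<lambda>n. c * f n) \<in> H2"
  using assms summable_mult[of "\<lambda>n. (cmod (f n))\<^sup>2" "(cmod c)\<^sup>2"]
  by (simp add: H2_def norm_mult power_mult_distrib)

lemma H2_diff:
  assumes "f \<in> H2" "g \<in> H2"
  shows "(\<lambda>n. f n - g n) \<in> H2"
  using H2_add[OF assms(1) H2_scale[OF assms(2), of "-1"]] by simp

lemma H2_shift: "f \<in> H2 \<Longrightarrow> shift f \<in> H2"
  using summable_Suc_iff[of "\<lambda>n. (cmod (shift f n))\<^sup>2"] by (simp add: H2_def shift_def)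

lemma H2_backshift: "f \<in> H2 \<Longrightarrow> backshift f \<in> H2"
  using summable_Suc_iff[of "\<lambda>n. (cmod (f n))\<^sup>2"] by (simp add: H2_def backshift_def)

lemma H2_single_0: "(\<lambda>n. if n = 0 then c else 0) \<in> H2"
  unfolding H2_def mem_Collect_eq by (rule summable_finite[of "{0}"]) auto

lemma backshift_shift [simp]: "backshift (shift f) = f"
  by (simp add: backshift_def shift_def)

lemma shift_backshift: "f 0 = 0 \<Longrightarrow> shift (backshift f) = f"
  by (auto simp: fun_eq_iff shift_def backshift_def split: nat.split)

lemma summable_h2_inner:
  assumes "f \<in> H2" "g \<in> H2"
  shows "summable (\<lambda>n. f n * cnj (g n))"
proof (rule summable_norm_cancel, rule summable_comparison_test')
  show "summable (\<lambda>n. (cmod (f n))\<^sup>2 + (cmod (g n))\<^sup>2)"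
    using assms by (auto simp: H2_def intro: summable_add)
  show "norm (cmod (f n * cnj (g n))) \<le> (cmod (f n))\<^sup>2 + (cmod (g n))\<^sup>2" for n
  proof -
    have "0 \<le> cmod (f n) * cmod (g n)"
      by simp
    then have "cmod (f n) * cmod (g n) \<le> (cmod (f n))\<^sup>2 + (cmod (g n))\<^sup>2"
      using sum_squares_bound[of "cmod (f n)" "cmod (g n)"] by linarith
    then show ?thesis
      by (simp add: norm_mult)
  qed
qed

lemma h2_inner_add_left:
  "f \<in> H2 \<Longrightarrow> g \<in> H2 \<Longrightarrow> h \<in> H2 \<Longrightarrow>
    h2_inner (\<lambda>n. f n + g n) h = h2_inner f h + h2_inner g h"
  by (simp add: h2_inner_def distrib_right suminf_add[symmetric] summable_h2_inner)

lemma h2_inner_add_right: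
  "f \<in> H2 \<Longrightarrow> g \<in> H2 \<Longrightarrow> h \<in> H2 \<Longrightarrow>
    h2_inner h (\<lambda>n. f n + g n) = h2_inner h f + h2_inner h g"
  by (simp add: h2_inner_def distrib_left suminf_add[symmetric] summable_h2_inner)

lemma h2_inner_diff_right:
  "f \<in> H2 \<Longrightarrow> g \<in> H2 \<Longrightarrow> h \<in> H2 \<Longrightarrow>
    h2_inner h (\<lambda>n. f n - g n) = h2_inner h f - h2_inner h g"
  by (simp add: h2_inner_def right_diff_distrib suminf_diff[symmetric] summable_h2_inner)

lemma h2_inner_scale_left:
  "f \<in> H2 \<Longrightarrow> g \<in> H2 \<Longrightarrow> h2_inner (\<lambda>n. c * f n) g = c * h2_inner f g"
  by (simp add: h2_inner_def mult.assoc suminf_mult[symmetric] summable_h2_inner)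

lemma h2_inner_scale_right:
  "f \<in> H2 \<Longrightarrow> g \<in> H2 \<Longrightarrow> h2_inner f (\<lambda>n. c * g n) = cnj c * h2_inner f g"
  by (simp add: h2_inner_def mult.left_commute suminf_mult[symmetric] summable_h2_inner)

lemma h2_inner_commute:
  assumes "f \<in> H2" "g \<in> H2"
  shows "h2_inner g f = cnj (h2_inner f g)"
proof -
  have "(\<lambda>n. cnj (f n * cnj (g n))) sums cnj (h2_inner f g)"
    using sums_cnj[THEN iffD2, OF summable_sums[OF summable_h2_inner[OF assms]]]
    by (simp add: h2_inner_def)
  then show ?thesis
    by (simp add: h2_inner_def sums_iff mult.commute)
qed

lemma h2_inner_self:
  assumes "f \<in> H2"
  shows "h2_inner f f = complex_of_real ((h2_norm f)\<^sup>2)"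
proof -
  have "(\<lambda>n. f n * cnj (f n)) = (\<lambda>n. complex_of_real ((cmod (f n))\<^sup>2))"
    by (simp add: fun_eq_iff complex_norm_square[symmetric])
  moreover have "0 \<le> (\<Sum>n. (cmod (f n))\<^sup>2)"
    using assms by (auto simp: H2_def intro: suminf_nonneg)
  ultimately show ?thesis
    using assms by (simp add: h2_inner_def h2_norm_def H2_def suminf_of_real)
qed

lemma h2_inner_shift_left:
  assumes "f \<in> H2" "g \<in> H2"
  shows "h2_inner (shift f) g = h2_inner f (backshift g)"
proof -
  have "summable (\<lambda>n. shift f n * cnj (g n))"
    using assms by (intro summable_h2_inner H2_shift)
  from suminf_split_head[OF this]
  have "(\<Sum>n. shift f n * cnj (g n)) = (\<Sum>n. shift f (Suc n) * cnj (g (Suc n)))"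
    by (simp add: shift_def)
  then show ?thesis
    by (simp add: h2_inner_def shift_def backshift_def)
qed

lemma h2_inner_shift_right:
  assumes "f \<in> H2" "g \<in> H2"
  shows "h2_inner f (shift g) = h2_inner (backshift f) g"
proof -
  have "h2_inner f (shift g) = cnj (h2_inner (shift g) f)"
    using h2_inner_commute[OF assms(1) H2_shift[OF assms(2)]] by simp
  also have "\<dots> = cnj (h2_inner g (backshift f))"
    using assms by (simp add: h2_inner_shift_left)
  also have "\<dots> = h2_inner (backshift f) g"
    using h2_inner_commute[OF H2_backshift[OF assms(1)] assms(2)] by simp
  finally show ?thesis .
qed

lemma h2_inner_single_0_right:
  "h2_inner f (\<lambda>n. if n = 0 then c else 0) = f 0 * cnj c"
  unfolding h2_inner_def by (subst suminf_finite[of "{0}"]) auto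

lemma h2_norm_nonneg: "f \<in> H2 \<Longrightarrow> 0 \<le> h2_norm f"
  by (simp add: h2_norm_def H2_def suminf_nonneg)

lemma h2_norm_square: "f \<in> H2 \<Longrightarrow> (h2_norm f)\<^sup>2 = (\<Sum>n. (cmod (f n))\<^sup>2)"
  by (simp add: h2_norm_def H2_def suminf_nonneg)

lemma h2_norm_eq_0_iff:
  assumes "f \<in> H2"
  shows "h2_norm f = 0 \<longleftrightarrow> f = (\<lambda>n. 0)"
proof -
  have "h2_norm f = 0 \<longleftrightarrow> (\<Sum>n. (cmod (f n))\<^sup>2) = 0"
    using assms by (simp add: h2_norm_def H2_def suminf_nonneg)
  also have "\<dots> \<longleftrightarrow> (\<forall>n. (cmod (f n))\<^sup>2 = 0)"
    using assms by (intro suminf_eq_zero_iff) (auto simp: H2_def)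
  finally show ?thesis
    by (auto simp: fun_eq_iff)
qed

lemma h2_norm_minus_commute: "h2_norm (\<lambda>n. f n - g n) = h2_norm (\<lambda>n. g n - f n)"
  by (simp add: h2_norm_def norm_minus_commute)

lemma h2_partial_sum_le_norm:
  assumes "finite A" "f \<in> H2"
  shows "(\<Sum>n\<in>A. (cmod (f n))\<^sup>2) \<le> (h2_norm f)\<^sup>2"
  using assms by (auto simp: H2_def h2_norm_square intro: sum_le_suminf)

lemma h2_coeff_le_norm:
  assumes "f \<in> H2"
  shows "cmod (f k) \<le> h2_norm f"
  using h2_partial_sum_le_norm[OF _ assms, of "{k}"] h2_norm_nonneg[OF assms]
  by (simp add: power2_le_iff_abs_le)

section \<open>The real Hilbert space of coefficient sequences\<close>

typedef l2 = H2 morphisms coeffs l2_of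
  by (rule exI[of _ "\<lambda>n. 0"]) simp

setup_lifting type_definition_l2

instantiation l2 :: real_inner
begin

lift_definition zero_l2 :: l2 is "\<lambda>n. 0"
  by simp

lift_definition plus_l2 :: "l2 \<Rightarrow> l2 \<Rightarrow> l2" is "\<lambda>f g n. f n + g n"
  by (rule H2_add)

lift_definition minus_l2 :: "l2 \<Rightarrow> l2 \<Rightarrow> l2" is "\<lambda>f g n. f n - g n"
  by (rule H2_diff)

lift_definition uminus_l2 :: "l2 \<Rightarrow> l2" is "\<lambda>f n. - f n"
  using H2_scale[of _ "-1"] by simp

lift_definition scaleR_l2 :: "real \<Rightarrow> l2 \<Rightarrow> l2" is "\<lambda>r f n. complex_of_real r * f n"
  by (rule H2_scale)

definition norm_l2 :: "l2 \<Rightarrow> real" where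
  "norm_l2 x = h2_norm (coeffs x)"

definition sgn_l2 :: "l2 \<Rightarrow> l2" where
  "sgn_l2 x = inverse (norm x) *\<^sub>R x"

definition dist_l2 :: "l2 \<Rightarrow> l2 \<Rightarrow> real" where
  "dist_l2 x y = norm (x - y)"

definition uniformity_l2 :: "(l2 \<times> l2) filter" where
  "uniformity_l2 = (INF e\<in>{0<..}. principal {(x, y). dist x y < e})"

definition open_l2 :: "l2 set \<Rightarrow> bool" where
  "open_l2 U = (\<forall>x\<in>U. eventually (\<lambda>(x', y). x' = x \<longrightarrow> y \<in> U) uniformity)"

definition inner_l2 :: "l2 \<Rightarrow> l2 \<Rightarrow> real" where
  "inner_l2 x y = Re (h2_inner (coeffs x) (coeffs y))"

instance
proof
  fix x y z :: l2 and a b :: real and U :: "l2 set"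
  show "x + y + z = x + (y + z)" by transfer (simp add: add.assoc)
  show "x + y = y + x" by transfer (simp add: add.commute)
  show "0 + x = x" by transfer simp
  show "- x + x = 0" by transfer simp
  show "x - y = x + - y" by transfer simp
  show "a *\<^sub>R (x + y) = a *\<^sub>R x + a *\<^sub>R y" by transfer (simp add: distrib_left)
  show "(a + b) *\<^sub>R x = a *\<^sub>R x + b *\<^sub>R x" by transfer (simp add: distrib_right)
  show "a *\<^sub>R b *\<^sub>R x = (a * b) *\<^sub>R x" by transfer (simp add: mult.assoc)
  show "1 *\<^sub>R x = x" by transfer simp
  show "sgn x = inverse (norm x) *\<^sub>R x" by (rule sgn_l2_def)
  show "dist x y = norm (x - y)" by (rule dist_l2_def)
  show "uniformity = (INF e\<in>{0<..}. principal {(x, y :: l2). dist x y < e})"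
    by (rule uniformity_l2_def)
  show "open U = (\<forall>x\<in>U. \<forall>\<^sub>F (x', y) in uniformity. x' = x \<longrightarrow> y \<in> U)"
    by (rule open_l2_def)
  show "inner x y = inner y x"
    using h2_inner_commute[OF coeffs[of x] coeffs[of y]] by (simp add: inner_l2_def)
  show "inner (x + y) z = inner x z + inner y z"
    using h2_inner_add_left[OF coeffs[of x] coeffs[of y] coeffs[of z]]
    by (simp add: inner_l2_def plus_l2.rep_eq)
  show "inner (a *\<^sub>R x) y = a * inner x y"
    using h2_inner_scale_left[OF coeffs[of x] coeffs[of y], of "complex_of_real a"]
    by (simp add: inner_l2_def scaleR_l2.rep_eq)
  show "0 \<le> inner x x"
    using h2_inner_self[OF coeffs[of x]] by (simp add: inner_l2_def)
  show "inner x x = 0 \<longleftrightarrow> x = 0"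
    using h2_inner_self[OF coeffs[of x]] h2_norm_eq_0_iff[OF coeffs[of x]]
    by (simp add: inner_l2_def coeffs_inject[symmetric] zero_l2.rep_eq)
  show "norm x = sqrt (inner x x)"
    using h2_inner_self[OF coeffs[of x]] h2_norm_nonneg[OF coeffs[of x]]
    by (simp add: inner_l2_def norm_l2_def)
qed

end

lemma l2_of_zero: "l2_of (\<lambda>n. 0) = 0"
  by (simp add: zero_l2_def)

lemma l2_of_add: "f \<in> H2 \<Longrightarrow> g \<in> H2 \<Longrightarrow> l2_of f + l2_of g = l2_of (\<lambda>n. f n + g n)"
  by (simp add: plus_l2_def l2_of_inverse)

lemma l2_of_diff: "f \<in> H2 \<Longrightarrow> g \<in> H2 \<Longrightarrow> l2_of f - l2_of g = l2_of (\<lambda>n. f n - g n)"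
  by (simp add: minus_l2_def l2_of_inverse)

lemma l2_of_scaleR: "f \<in> H2 \<Longrightarrow> r *\<^sub>R l2_of f = l2_of (\<lambda>n. complex_of_real r * f n)"
  by (simp add: scaleR_l2_def l2_of_inverse)

lemma inner_l2_of: "f \<in> H2 \<Longrightarrow> g \<in> H2 \<Longrightarrow> inner (l2_of f) (l2_of g) = Re (h2_inner f g)"
  by (simp add: inner_l2_def l2_of_inverse)

lemma dist_l2_of:
  "f \<in> H2 \<Longrightarrow> g \<in> H2 \<Longrightarrow> dist (l2_of f) (l2_of g) = h2_norm (\<lambda>n. f n - g n)"
  by (simp add: dist_l2_def norm_l2_def l2_of_diff l2_of_inverse H2_diff)

lemma tendsto_l2_of_iff:
  assumes "\<And>k. fs k \<in> H2" "f \<in> H2"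
  shows "(\<lambda>k. l2_of (fs k)) \<longlonglongrightarrow> l2_of f \<longleftrightarrow> h2_tendsto fs f"
  unfolding h2_tendsto_def by (subst tendsto_dist_iff) (simp add: assms dist_l2_of)

text \<open>Since \<open>Re (h2_inner (- \<i> f) g) = Im (h2_inner f g)\<close>, the real inner product of \<open>l2\<close>
  determines the complex one.\<close>
lemma h2_inner_eq_Complex:
  assumes "f \<in> H2" "g \<in> H2"
  shows "h2_inner f g =
    Complex (inner (l2_of f) (l2_of g)) (inner (l2_of (\<lambda>n. - \<i> * f n)) (l2_of g))"
proof -
  have "(\<lambda>n. - \<i> * f n) \<in> H2"
    using assms(1) by (rule H2_scale)
  then have "inner (l2_of (\<lambda>n. - \<i> * f n)) (l2_of g) = Re (- \<i> * h2_inner f g)"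
    by (simp only: inner_l2_of[OF _ assms(2)] h2_inner_scale_left[OF assms])
  then show ?thesis
    using inner_l2_of[OF assms] by (simp add: complex_eq_iff)
qed

lemma tendsto_h2_inner_right:
  assumes "\<And>k. fs k \<in> H2" "f \<in> H2" "g \<in> H2" "h2_tendsto fs f"
  shows "(\<lambda>k. h2_inner g (fs k)) \<longlonglongrightarrow> h2_inner g f"
proof -
  have "(\<lambda>k. l2_of (fs k)) \<longlonglongrightarrow> l2_of f"
    using assms tendsto_l2_of_iff by blast
  then have "(\<lambda>k. Complex (inner (l2_of g) (l2_of (fs k)))
      (inner (l2_of (\<lambda>n. - \<i> * g n)) (l2_of (fs k)))) \<longlonglongrightarrow> h2_inner g f"
    unfolding h2_inner_eq_Complex[OF assms(3,2)] by (intro tendsto_Complex tendsto_inner tendsto_const)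
  then show ?thesis
    using assms by (simp add: h2_inner_eq_Complex)
qed

lemma h2_norm_pointwise_limit_le:
  assumes bound: "\<And>n. n \<ge> M \<Longrightarrow> g n \<in> H2 \<and> h2_norm (g n) \<le> e"
    and lim: "\<And>k. (\<lambda>n. g n k) \<longlonglongrightarrow> G k"
  shows "G \<in> H2 \<and> h2_norm G \<le> e"
proof -
  have e: "0 \<le> e"
    using bound[of M] h2_norm_nonneg by force
  have partial: "(\<Sum>k<K. (cmod (G k))\<^sup>2) \<le> e\<^sup>2" for K
  proof (rule LIMSEQ_le_const2)
    show "(\<lambda>n. \<Sum>k<K. (cmod (g n k))\<^sup>2) \<longlonglongrightarrow> (\<Sum>k<K. (cmod (G k))\<^sup>2)"
      by (intro tendsto_intros lim)
    have "(\<Sum>k<K. (cmod (g n k))\<^sup>2) \<le> e\<^sup>2" if "n \<ge> M" for n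
    proof -
      have "(\<Sum>k<K. (cmod (g n k))\<^sup>2) \<le> (h2_norm (g n))\<^sup>2"
        using bound[OF that] by (intro h2_partial_sum_le_norm) auto
      also have "\<dots> \<le> e\<^sup>2"
        using bound[OF that] h2_norm_nonneg by (intro power_mono) auto
      finally show ?thesis .
    qed
    then show "\<exists>N. \<forall>n\<ge>N. (\<Sum>k<K. (cmod (g n k))\<^sup>2) \<le> e\<^sup>2"
      by blast
  qed
  have summable: "summable (\<lambda>k. (cmod (G k))\<^sup>2)"
    by (rule summableI_nonneg_bounded[OF _ partial]) simp
  then have "G \<in> H2"
    by (simp add: H2_def)
  moreover have "(h2_norm G)\<^sup>2 \<le> e\<^sup>2"
    using suminf_le_const[OF summable partial] h2_norm_square[OF \<open>G \<in> H2\<close>] by simp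
  ultimately show ?thesis
    using e by (simp add: power2_le_iff_abs_le)
qed

lemma dist_coeffs_le: "dist (coeffs x k) (coeffs y k) \<le> dist x y"
  using h2_coeff_le_norm[OF coeffs[of "x - y"], of k]
  by (simp add: dist_norm dist_l2_def norm_l2_def minus_l2.rep_eq)

lemma Cauchy_coeffs:
  assumes "Cauchy X"
  shows "Cauchy (\<lambda>n. coeffs (X n) k)"
proof (rule metric_CauchyI)
  fix e :: real
  assume "e > 0"
  then obtain M where "\<forall>m\<ge>M. \<forall>n\<ge>M. dist (X m) (X n) < e"
    using metric_CauchyD[OF assms] by blast
  then show "\<exists>M. \<forall>m\<ge>M. \<forall>n\<ge>M. dist (coeffs (X m) k) (coeffs (X n) k) < e"
    using dist_coeffs_le order_le_less_trans by blast
qed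

lemma Cauchy_coeffs_tail:
  assumes "Cauchy X" "\<And>k. (\<lambda>n. coeffs (X n) k) \<longlonglongrightarrow> L k" "e > 0"
  shows "\<exists>M. \<forall>m\<ge>M. (\<lambda>k. coeffs (X m) k - L k) \<in> H2 \<and> h2_norm (\<lambda>k. coeffs (X m) k - L k) \<le> e"
proof -
  obtain M where M: "\<forall>m\<ge>M. \<forall>n\<ge>M. dist (X m) (X n) < e"
    using metric_CauchyD[OF assms(1,3)] by blast
  have "(\<lambda>k. coeffs (X m) k - L k) \<in> H2 \<and> h2_norm (\<lambda>k. coeffs (X m) k - L k) \<le> e"
    if "m \<ge> M" for m
  proof (rule h2_norm_pointwise_limit_le)
    show "coeffs (X m - X n) \<in> H2 \<and> h2_norm (coeffs (X m - X n)) \<le> e" if "n \<ge> M" for n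
      using M \<open>m \<ge> M\<close> that coeffs[of "X m - X n"] by (auto simp: dist_l2_def norm_l2_def less_imp_le)
    show "(\<lambda>n. coeffs (X m - X n) k) \<longlonglongrightarrow> coeffs (X m) k - L k" for k
      by (simp add: minus_l2.rep_eq) (intro tendsto_intros assms(2))
  qed
  then show ?thesis
    by blast
qed

instance l2 :: complete_space
proof
  fix X :: "nat \<Rightarrow> l2"
  assume X: "Cauchy X"
  then obtain L where L: "\<And>k. (\<lambda>n. coeffs (X n) k) \<longlonglongrightarrow> L k"
    using Cauchy_coeffs unfolding Cauchy_convergent_iff convergent_def by metis
  obtain M1 where "(\<lambda>k. coeffs (X M1) k - L k) \<in> H2"
    using Cauchy_coeffs_tail[OF X L zero_less_one] by auto
  then have L_H2: "L \<in> H2"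
    using H2_diff[OF coeffs[of "X M1"]] by fastforce
  have "X \<longlonglongrightarrow> l2_of L"
  proof (rule LIMSEQ_I)
    fix r :: real
    assume "r > 0"
    then obtain M where M: "\<forall>m\<ge>M. h2_norm (\<lambda>k. coeffs (X m) k - L k) \<le> r / 2"
      using Cauchy_coeffs_tail[OF X L, of "r / 2"] by auto
    have "norm (X m - l2_of L) < r" if "m \<ge> M" for m
      using M[rule_format, OF that] \<open>r > 0\<close>
      by (simp add: norm_l2_def minus_l2.rep_eq l2_of_inverse[OF L_H2])
    then show "\<exists>M. \<forall>m\<ge>M. norm (X m - l2_of L) < r"
      by blast
  qed
  then show "convergent X"
    by (rule convergentI)
qed

section \<open>Closest points and projections in Hilbert spaces\<close>

lemma parallelogram_law:
  fixes x y :: "'a::real_inner"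
  shows "(norm (x + y))\<^sup>2 + (norm (x - y))\<^sup>2 = 2 * (norm x)\<^sup>2 + 2 * (norm y)\<^sup>2"
  unfolding power2_norm_eq_inner by (simp add: inner_add inner_diff inner_commute)

text \<open>The midpoint of \<open>x\<close> and \<open>y\<close> lies in \<open>C\<close>, so it is no closer to \<open>a\<close> than \<open>d\<close>; the
  parallelogram law turns this into a bound on \<open>dist x y\<close>.\<close>
lemma convex_dist_square_le:
  fixes a x y :: "'a::real_inner"
  assumes "convex C" "x \<in> C" "y \<in> C" "0 \<le> d" "\<And>z. z \<in> C \<Longrightarrow> d \<le> dist a z"
  shows "(dist x y)\<^sup>2 \<le> 2 * (dist a x)\<^sup>2 + 2 * (dist a y)\<^sup>2 - 4 * d\<^sup>2"
proof -
  have "(1/2) *\<^sub>R x + (1/2) *\<^sub>R y \<in> C"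
    using convexD[OF assms(1-3)] by simp
  then have "d \<le> norm (a - ((1/2) *\<^sub>R x + (1/2) *\<^sub>R y))"
    using assms(5) by (simp add: dist_norm)
  also have "\<dots> = norm ((a - x) + (a - y)) / 2"
  proof -
    have "(a - x) + (a - y) = 2 *\<^sub>R (a - ((1/2) *\<^sub>R x + (1/2) *\<^sub>R y))"
      by (simp add: algebra_simps scaleR_2)
    then show ?thesis
      by simp
  qed
  finally have "d\<^sup>2 \<le> (norm ((a - x) + (a - y)) / 2)\<^sup>2"
    by (rule power_mono) (rule assms(4))
  then have "4 * d\<^sup>2 \<le> (norm ((a - x) + (a - y)))\<^sup>2"
    by (simp add: power_divide)
  then show ?thesis
    using parallelogram_law[of "a - x" "a - y"] by (simp add: dist_norm norm_minus_commute)
qed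

lemma Cauchy_if_dist_square_le:
  fixes Y :: "nat \<Rightarrow> 'a::metric_space"
  assumes "\<And>m n. (dist (Y m) (Y n))\<^sup>2 \<le> r m + r n" and "r \<longlonglongrightarrow> 0"
  shows "Cauchy Y"
proof (rule metric_CauchyI)
  fix e :: real
  assume "e > 0"
  then have "eventually (\<lambda>n. r n < e\<^sup>2 / 2) sequentially"
    using order_tendstoD(2)[OF assms(2), of "e\<^sup>2 / 2"] by simp
  then obtain N where N: "\<And>n. n \<ge> N \<Longrightarrow> r n < e\<^sup>2 / 2"
    by (auto simp: eventually_sequentially)
  have "dist (Y m) (Y n) < e" if "m \<ge> N" "n \<ge> N" for m n
  proof -
    have "(dist (Y m) (Y n))\<^sup>2 < e\<^sup>2"
      using assms(1)[of m n] N[OF that(1)] N[OF that(2)] by linarith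
    then show ?thesis
      using \<open>e > 0\<close> by (simp add: power_less_imp_less_base)
  qed
  then show "\<exists>N. \<forall>m\<ge>N. \<forall>n\<ge>N. dist (Y m) (Y n) < e"
    by blast
qed

lemma Hilbert_closest_point_exists:
  fixes C :: "'a::{real_inner, complete_space} set"
  assumes "closed C" "convex C" "C \<noteq> {}"
  shows "\<exists>p\<in>C. \<forall>y\<in>C. dist a p \<le> dist a y"
proof -
  define d where "d = infdist a C"
  have d: "0 \<le> d" "\<And>y. y \<in> C \<Longrightarrow> d \<le> dist a y"
    by (simp_all add: d_def infdist_nonneg infdist_le)
  have "\<exists>y\<in>C. (dist a y)\<^sup>2 < d\<^sup>2 + inverse (Suc n)" for n
  proof -
    have "d < sqrt (d\<^sup>2 + inverse (Suc n))"
      using d(1) real_sqrt_less_mono[of "d\<^sup>2" "d\<^sup>2 + inverse (Suc n)"] by simp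
    then obtain y where "y \<in> C" "dist a y < sqrt (d\<^sup>2 + inverse (Suc n))"
      using assms(3) by (auto simp: d_def infdist_notempty cINF_less_iff)
    moreover from this(2) have "(dist a y)\<^sup>2 < (sqrt (d\<^sup>2 + inverse (Suc n)))\<^sup>2"
      by (intro power_strict_mono) auto
    ultimately show ?thesis
      by auto
  qed
  then obtain Y where Y: "\<And>n. Y n \<in> C" "\<And>n. (dist a (Y n))\<^sup>2 < d\<^sup>2 + inverse (Suc n)"
    by metis
  have "(dist (Y m) (Y n))\<^sup>2 \<le> 2 * inverse (Suc m) + 2 * inverse (Suc n)" for m n
    using convex_dist_square_le[OF assms(2) Y(1)[of m] Y(1)[of n] d] Y(2)[of m] Y(2)[of n]
    by linarith
  then have "Cauchy Y"
    by (rule Cauchy_if_dist_square_le) (rule tendsto_mult_right_zero[OF LIMSEQ_inverse_real_of_nat])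
  then obtain p where p: "Y \<longlonglongrightarrow> p"
    by (auto simp: Cauchy_convergent_iff convergent_def)
  have "p \<in> C"
    using closed_sequentially[OF assms(1) _ p] Y(1) by blast
  moreover have "(dist a p)\<^sup>2 \<le> d\<^sup>2"
  proof (rule LIMSEQ_le)
    show "(\<lambda>n. (dist a (Y n))\<^sup>2) \<longlonglongrightarrow> (dist a p)\<^sup>2"
      by (intro tendsto_power tendsto_dist tendsto_const p)
    show "(\<lambda>n. d\<^sup>2 + inverse (Suc n)) \<longlonglongrightarrow> d\<^sup>2"
      using tendsto_add[OF tendsto_const LIMSEQ_inverse_real_of_nat, of "d\<^sup>2"] by simp
    show "\<exists>N. \<forall>n\<ge>N. (dist a (Y n))\<^sup>2 \<le> d\<^sup>2 + inverse (Suc n)"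
      using Y(2) less_imp_le by blast
  qed
  then have "dist a p \<le> d"
    using d(1) by (simp add: power2_le_iff_abs_le)
  ultimately show ?thesis
    using d(2) order_trans by blast
qed

text \<open>If \<open>p\<close> is a closest point of \<open>C\<close> to \<open>a\<close>, then \<open>a - p\<close> is orthogonal to every line
  through \<open>0\<close> that lies in \<open>C\<close>: otherwise moving along the line would bring \<open>p\<close> closer to \<open>a\<close>.\<close>
lemma closest_point_orthogonal_line:
  fixes a p z :: "'a::real_inner"
  assumes "convex C" "closed C" "p \<in> C" "\<forall>y\<in>C. dist a p \<le> dist a y"
    and line: "\<And>t. t *\<^sub>R z \<in> C"
  shows "inner (a - p) z = 0"
proof (rule ccontr)
  assume nz: "inner (a - p) z \<noteq> 0"
  define t where "t = (inner (a - p) p + 1) / inner (a - p) z"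
  have "inner (a - p) (t *\<^sub>R z - p) \<le> 0"
    using any_closest_point_dot[OF assms(1-3) line assms(4)] .
  moreover have "inner (a - p) (t *\<^sub>R z - p) = 1"
    using nz by (simp add: t_def inner_diff_right)
  ultimately show False
    by simp
qed

lemma Hilbert_projection_exists:
  fixes S :: "'a::{real_inner, complete_space} set"
  assumes "closed S" "subspace S"
  shows "\<exists>p\<in>S. \<forall>z\<in>S. inner (a - p) z = 0"
proof -
  have "convex S" "S \<noteq> {}"
    using assms(2) subspace_0 subspace_imp_convex by auto
  then obtain p where "p \<in> S" "\<forall>y\<in>S. dist a p \<le> dist a y"
    using Hilbert_closest_point_exists[OF assms(1)] by blast
  then show ?thesis
    using closest_point_orthogonal_line[OF \<open>convex S\<close> assms(1)] subspace_scale[OF assms(2)]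
    by blast
qed

lemma Hilbert_orthogonal_to_non_dense_subspace:
  fixes S :: "'a::{real_inner, complete_space} set"
  assumes "subspace S" "a \<notin> closure S"
  shows "\<exists>w. w \<noteq> 0 \<and> (\<forall>z\<in>S. inner w z = 0)"
proof -
  have "convex (closure S)" "closure S \<noteq> {}"
    using assms(1) subspace_0 subspace_imp_convex by auto
  then obtain p where p: "p \<in> closure S" "\<forall>y\<in>closure S. dist a p \<le> dist a y"
    using Hilbert_closest_point_exists[of "closure S"] by blast
  have "inner (a - p) z = 0" if "z \<in> S" for z
    using closest_point_orthogonal_line[OF \<open>convex (closure S)\<close> closed_closure p]
      subspace_scale[OF assms(1) that] closure_subset by blast
  moreover have "a - p \<noteq> 0"
    using p(1) assms(2) by auto
  ultimately show ?thesis
    by blast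
qed

lemma complex_eq_0_if_Re_mult_eq_0:
  fixes z :: complex
  assumes "\<And>c. Re (c * z) = 0"
  shows "z = 0"
  using assms[of 1] assms[of \<i>] by (simp add: complex_eq_iff)

section \<open>Adjoints of densely defined operators\<close>

lemma densely_defined_iff_closure_l2_of:
  assumes "D \<subseteq> H2"
  shows "densely_defined D \<longleftrightarrow> closure (l2_of ` D) = UNIV"
proof -
  have dist: "dist (l2_of g) x = h2_norm (\<lambda>n. coeffs x n - g n)" if "g \<in> D" for g x
    using assms that dist_l2_of[of g "coeffs x"] coeffs[of x] h2_norm_minus_commute
    by (auto simp: coeffs_inverse)
  have "densely_defined D \<longleftrightarrow> (\<forall>x. \<forall>e>0. \<exists>g\<in>D. h2_norm (\<lambda>n. coeffs x n - g n) < e)"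
    unfolding densely_defined_def type_definition.Rep_range[OF type_definition_l2, symmetric]
    by simp
  also have "\<dots> \<longleftrightarrow> closure (l2_of ` D) = UNIV"
    unfolding set_eq_iff closure_approachable by (simp add: dist)
  finally show ?thesis .
qed

lemma subspace_l2_of_image:
  assumes "D \<subseteq> H2" "(\<lambda>n. 0) \<in> D"
    and "\<And>f g. f \<in> D \<Longrightarrow> g \<in> D \<Longrightarrow> (\<lambda>n. f n + g n) \<in> D"
    and "\<And>c f. f \<in> D \<Longrightarrow> (\<lambda>n. c * f n) \<in> D"
  shows "subspace (l2_of ` D)"
  unfolding subspace_def
proof (intro conjI ballI allI)
  show "0 \<in> l2_of ` D"
    using assms(2) l2_of_zero by force
  show "x + y \<in> l2_of ` D" if "x \<in> l2_of ` D" "y \<in> l2_of ` D" for x y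
    using that assms(1,3) by (auto simp: l2_of_add subset_iff)
  show "c *\<^sub>R x \<in> l2_of ` D" if "x \<in> l2_of ` D" for c x
    using that assms(1,4) by (auto simp: l2_of_scaleR subset_iff)
qed

locale densely_defined_operator =
  fixes D :: "h2 set" and T :: "h2 \<Rightarrow> h2"
  assumes linear: "linear_operator D T"
    and dense: "densely_defined D"
begin

lemma domain_subset_H2: "D \<subseteq> H2"
  and zero_in_domain: "(\<lambda>n. 0) \<in> D"
  and add_in_domain: "f \<in> D \<Longrightarrow> g \<in> D \<Longrightarrow> (\<lambda>n. f n + g n) \<in> D"
  and scale_in_domain: "f \<in> D \<Longrightarrow> (\<lambda>n. c * f n) \<in> D"
  and image_in_H2: "f \<in> D \<Longrightarrow> T f \<in> H2"
  and T_add: "f \<in> D \<Longrightarrow> g \<in> D \<Longrightarrow> T (\<lambda>n. f n + g n) = (\<lambda>n. T f n + T g n)"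
  and T_scale: "f \<in> D \<Longrightarrow> T (\<lambda>n. c * f n) = (\<lambda>n. c * T f n)"
  using linear by (auto simp: linear_operator_def)

lemma domain_in_H2: "f \<in> D \<Longrightarrow> f \<in> H2"
  using domain_subset_H2 by blast

lemma T_zero: "T (\<lambda>n. 0) = (\<lambda>n. 0)"
  using T_scale[OF zero_in_domain, of 0] by (simp only: mult_zero_left)

lemma orthogonal_to_domain_eq_0:
  assumes "h \<in> H2" "\<forall>f\<in>D. h2_inner f h = 0"
  shows "h = (\<lambda>n. 0)"
proof -
  have "inner (l2_of h) (l2_of f) = 0" if "f \<in> D" for f
    using assms that h2_inner_commute[OF domain_in_H2[OF that] assms(1)]
    by (simp add: inner_l2_of domain_in_H2)
  then have "l2_of ` D \<subseteq> {x. inner (l2_of h) x = 0}"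
    by blast
  then have "closure (l2_of ` D) \<subseteq> {x. inner (l2_of h) x = 0}"
    by (rule closure_minimal) (intro closed_Collect_eq continuous_intros)
  moreover have "closure (l2_of ` D) = UNIV"
    using dense domain_subset_H2 by (simp add: densely_defined_iff_closure_l2_of)
  ultimately have "inner (l2_of h) (l2_of h) = 0"
    by blast
  then have "l2_of h = l2_of (\<lambda>n. 0)"
    by (simp add: l2_of_zero)
  then show ?thesis
    using assms(1) by (simp add: l2_of_inject)
qed

lemma adj_unique:
  assumes "h \<in> H2" "h' \<in> H2"
    and "\<forall>f\<in>D. h2_inner (T f) g = h2_inner f h" "\<forall>f\<in>D. h2_inner (T f) g = h2_inner f h'"
  shows "h = h'"
proof -
  have "(\<lambda>n. h n - h' n) = (\<lambda>n. 0)"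
    using assms by (intro orthogonal_to_domain_eq_0) (auto simp: H2_diff h2_inner_diff_right domain_in_H2)
  then show ?thesis
    by (simp add: fun_eq_iff)
qed

lemma adjI:
  assumes "g \<in> H2" "h \<in> H2" "\<forall>f\<in>D. h2_inner (T f) g = h2_inner f h"
  shows "g \<in> adj_dom D T" "adj D T g = h"
proof -
  show "g \<in> adj_dom D T"
    using assms by (auto simp: adj_dom_def)
  show "adj D T g = h"
    unfolding adj_def
  proof (rule the_equality)
    show "h \<in> H2 \<and> (\<forall>f\<in>D. h2_inner (T f) g = h2_inner f h)"
      using assms by blast
    show "h' = h" if "h' \<in> H2 \<and> (\<forall>f\<in>D. h2_inner (T f) g = h2_inner f h')" for h'
      using that assms adj_unique[of h' h g] by blast
  qed
qed

lemma adjD: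
  assumes "g \<in> adj_dom D T"
  shows "g \<in> H2" "adj D T g \<in> H2" "\<And>f. f \<in> D \<Longrightarrow> h2_inner (T f) g = h2_inner f (adj D T g)"
proof -
  obtain h where "g \<in> H2" "h \<in> H2" "\<forall>f\<in>D. h2_inner (T f) g = h2_inner f h"
    using assms by (auto simp: adj_dom_def)
  with adjI(2)[OF this] show "g \<in> H2" "adj D T g \<in> H2"
    "\<And>f. f \<in> D \<Longrightarrow> h2_inner (T f) g = h2_inner f (adj D T g)"
    by auto
qed

lemma linear_operator_adj: "linear_operator (adj_dom D T) (adj D T)"
proof -
  have add: "(\<lambda>n. g n + g' n) \<in> adj_dom D T \<and>
      adj D T (\<lambda>n. g n + g' n) = (\<lambda>n. adj D T g n + adj D T g' n)"
    if "g \<in> adj_dom D T" "g' \<in> adj_dom D T" for g g'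
    using adjD[OF that(1)] adjD[OF that(2)] adjI[of "\<lambda>n. g n + g' n" "\<lambda>n. adj D T g n + adj D T g' n"]
    by (simp add: H2_add h2_inner_add_right image_in_H2 domain_in_H2)
  have scale: "(\<lambda>n. c * g n) \<in> adj_dom D T \<and> adj D T (\<lambda>n. c * g n) = (\<lambda>n. c * adj D T g n)"
    if "g \<in> adj_dom D T" for g c
    using adjD[OF that] adjI[of "\<lambda>n. c * g n" "\<lambda>n. c * adj D T g n"]
    by (simp add: H2_scale h2_inner_scale_right image_in_H2 domain_in_H2)
  have "(\<lambda>n. 0) \<in> adj_dom D T"
    using adjI(1)[of "\<lambda>n. 0" "\<lambda>n. 0"] by (simp add: h2_inner_def)
  then show ?thesis
    unfolding linear_operator_def using add scale adjD(1,2) by blast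
qed

lemma closed_operator_adj: "closed_operator (adj_dom D T) (adj D T)"
  unfolding closed_operator_def
proof (intro allI impI conjI)
  fix gs g h
  assume gs: "\<forall>k. gs k \<in> adj_dom D T" and "g \<in> H2" "h \<in> H2"
    and "h2_tendsto gs g" "h2_tendsto (\<lambda>k. adj D T (gs k)) h"
  have "h2_inner (T f) g = h2_inner f h" if "f \<in> D" for f
  proof (rule LIMSEQ_unique)
    show "(\<lambda>k. h2_inner (T f) (gs k)) \<longlonglongrightarrow> h2_inner (T f) g"
      using gs \<open>g \<in> H2\<close> \<open>h2_tendsto gs g\<close> that
      by (intro tendsto_h2_inner_right) (auto simp: adjD image_in_H2)
    have "(\<lambda>k. h2_inner f (adj D T (gs k))) \<longlonglongrightarrow> h2_inner f h"
      using gs \<open>h \<in> H2\<close> \<open>h2_tendsto (\<lambda>k. adj D T (gs k)) h\<close> that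
      by (intro tendsto_h2_inner_right) (auto simp: adjD domain_in_H2)
    then show "(\<lambda>k. h2_inner (T f) (gs k)) \<longlonglongrightarrow> h2_inner f h"
      using gs that by (simp add: adjD(3))
  qed
  then have "\<forall>f\<in>D. h2_inner (T f) g = h2_inner f h"
    by blast
  from adjI[OF \<open>g \<in> H2\<close> \<open>h \<in> H2\<close> this] show "g \<in> adj_dom D T" "adj D T g = h" .
qed

lemma exists_domain_coeff_0_eq_1: "\<exists>f\<in>D. f 0 = 1"
proof -
  obtain g where g: "g \<in> D" "h2_norm (\<lambda>n. (if n = 0 then 1 else 0) - g n) < 1"
    using dense[unfolded densely_defined_def, rule_format, OF H2_single_0[of 1] zero_less_one]
    by blast
  then have "cmod (1 - g 0) < 1"
    using h2_coeff_le_norm[OF H2_diff[OF H2_single_0[of 1] domain_in_H2[OF g(1)]], of 0] by simp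
  then have "g 0 \<noteq> 0"
    by auto
  then show ?thesis
    using scale_in_domain[OF g(1), of "1 / g 0"] by (intro bexI[of _ "\<lambda>n. 1 / g 0 * g n"]) auto
qed

definition graph :: "(l2 \<times> l2) set" where
  "graph = (\<lambda>f. (l2_of f, l2_of (T f))) ` D"

lemma subspace_graph: "subspace graph"
  unfolding subspace_def graph_def
proof (intro conjI ballI allI)
  show "0 \<in> (\<lambda>f. (l2_of f, l2_of (T f))) ` D"
    using zero_in_domain by (force simp: T_zero l2_of_zero zero_prod_def)
  show "x + y \<in> (\<lambda>f. (l2_of f, l2_of (T f))) ` D"
    if "x \<in> (\<lambda>f. (l2_of f, l2_of (T f))) ` D" "y \<in> (\<lambda>f. (l2_of f, l2_of (T f))) ` D" for x y
    using that add_in_domain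
    by (auto simp: l2_of_add domain_in_H2 image_in_H2 T_add intro!: image_eqI)
  show "c *\<^sub>R x \<in> (\<lambda>f. (l2_of f, l2_of (T f))) ` D"
    if "x \<in> (\<lambda>f. (l2_of f, l2_of (T f))) ` D" for c x
    using that scale_in_domain
    by (auto simp: l2_of_scaleR domain_in_H2 image_in_H2 T_scale intro!: image_eqI)
qed

text \<open>The orthogonality is only real; the complex identity defining the adjoint is recovered by
  testing against all complex multiples \<open>c f\<close>.\<close>
lemma adj_dom_if_orthogonal_to_graph:
  assumes "a \<in> H2" "Q \<in> H2" and orth: "\<forall>y\<in>graph. inner (- l2_of a, l2_of Q) y = 0"
  shows "Q \<in> adj_dom D T"
proof -
  have "h2_inner (T f) Q - h2_inner f a = 0" if "f \<in> D" for f
  proof (rule complex_eq_0_if_Re_mult_eq_0)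
    fix c
    have "(\<lambda>n. c * f n) \<in> D"
      using that by (rule scale_in_domain)
    then have "inner (- l2_of a, l2_of Q) (l2_of (\<lambda>n. c * f n), l2_of (T (\<lambda>n. c * f n))) = 0"
      using orth by (auto simp: graph_def)
    then have "inner (l2_of (\<lambda>n. c * f n)) (- l2_of a) + inner (l2_of (T (\<lambda>n. c * f n))) (l2_of Q) = 0"
      by (simp add: inner_commute)
    then have "Re (c * h2_inner (T f) Q) - Re (c * h2_inner f a) = 0"
      using that assms(1,2)
      by (simp add: inner_l2_of T_scale H2_scale h2_inner_scale_left image_in_H2 domain_in_H2)
    then show "Re (c * (h2_inner (T f) Q - h2_inner f a)) = 0"
      by (simp add: right_diff_distrib)
  qed
  then show ?thesis
    using adjI(1)[OF assms(2,1)] by simp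
qed

end

locale closed_densely_defined_operator = densely_defined_operator +
  assumes closed: "closed_operator D T"
begin

lemma closed_graph: "closed graph"
  unfolding closed_sequential_limits
proof (intro allI impI, elim conjE)
  fix x l
  assume "\<forall>n. x n \<in> graph" and lim: "x \<longlonglongrightarrow> l"
  then have "\<forall>n. \<exists>f. f \<in> D \<and> x n = (l2_of f, l2_of (T f))"
    by (auto simp: graph_def)
  from choice[OF this] obtain fs where fs: "\<And>n. fs n \<in> D" "\<And>n. x n = (l2_of (fs n), l2_of (T (fs n)))"
    by blast
  have "(\<lambda>n. l2_of (fs n)) \<longlonglongrightarrow> l2_of (coeffs (fst l))"
    using tendsto_fst[OF lim] by (simp add: fs(2) coeffs_inverse)
  then have "h2_tendsto fs (coeffs (fst l))"
    using fs(1) coeffs by (simp add: tendsto_l2_of_iff domain_in_H2)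
  moreover have "(\<lambda>n. l2_of (T (fs n))) \<longlonglongrightarrow> l2_of (coeffs (snd l))"
    using tendsto_snd[OF lim] by (simp add: fs(2) coeffs_inverse)
  then have "h2_tendsto (\<lambda>n. T (fs n)) (coeffs (snd l))"
    using fs(1) coeffs by (simp add: tendsto_l2_of_iff image_in_H2)
  ultimately have "coeffs (fst l) \<in> D \<and> T (coeffs (fst l)) = coeffs (snd l)"
    using closed fs(1) coeffs unfolding closed_operator_def by blast
  then show "l \<in> graph"
    unfolding graph_def by (auto simp: coeffs_inverse intro!: image_eqI[of _ _ "coeffs (fst l)"])
qed

text \<open>Von Neumann's argument: project \<open>(0, w)\<close> onto the graph of \<open>T\<close>. The residual
  \<open>(- a, w - T a)\<close> is orthogonal to the graph, so \<open>w - T a\<close> lies in the adjoint domain;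
  its orthogonality to \<open>w\<close> then forces the residual to vanish.\<close>
lemma orthogonal_to_adj_dom_eq_0:
  assumes w: "w \<in> H2" and orth: "\<forall>g\<in>adj_dom D T. h2_inner g w = 0"
  shows "w = (\<lambda>n. 0)"
proof -
  obtain q where "q \<in> graph" and q: "\<forall>y\<in>graph. inner ((0, l2_of w) - q) y = 0"
    using Hilbert_projection_exists[OF closed_graph subspace_graph] by blast
  then obtain a where a: "a \<in> D" "q = (l2_of a, l2_of (T a))"
    by (auto simp: graph_def)
  define Q where "Q = (\<lambda>n. w n - T a n)"
  have aH: "a \<in> H2" and QH: "Q \<in> H2"
    using a(1) w by (simp_all add: Q_def domain_in_H2 H2_diff image_in_H2)
  have residual: "(0, l2_of w) - q = (- l2_of a, l2_of Q)"
    using a(2) w by (simp add: Q_def l2_of_diff image_in_H2 a(1))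
  have "Q \<in> adj_dom D T"
    using q by (intro adj_dom_if_orthogonal_to_graph[OF aH QH]) (simp add: residual)
  then have "inner (0, l2_of w) ((0, l2_of w) - q) = 0"
    using orth QH w h2_inner_commute[OF QH w] by (simp add: residual inner_l2_of)
  moreover have "inner q ((0, l2_of w) - q) = 0"
    using q \<open>q \<in> graph\<close> by (simp add: inner_commute)
  ultimately have "inner ((0, l2_of w) - q) ((0, l2_of w) - q) = 0"
    by (simp only: inner_diff_left)
  then have "l2_of a = 0" "l2_of Q = 0"
    by (simp_all add: residual zero_prod_def add_nonneg_eq_0_iff)
  then have "a = (\<lambda>n. 0)"
    using aH by (simp add: l2_of_zero[symmetric] l2_of_inject)
  then have "Q = w"
    by (simp add: Q_def T_zero)
  then show ?thesis
    using \<open>l2_of Q = 0\<close> w by (simp add: l2_of_zero[symmetric] l2_of_inject)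
qed

lemma densely_defined_adj: "densely_defined (adj_dom D T)"
proof (rule ccontr)
  assume "\<not> densely_defined (adj_dom D T)"
  have adj_dom: "adj_dom D T \<subseteq> H2" "(\<lambda>n. 0) \<in> adj_dom D T"
    "\<And>f g. f \<in> adj_dom D T \<Longrightarrow> g \<in> adj_dom D T \<Longrightarrow> (\<lambda>n. f n + g n) \<in> adj_dom D T"
    "\<And>c f. f \<in> adj_dom D T \<Longrightarrow> (\<lambda>n. c * f n) \<in> adj_dom D T"
    using linear_operator_adj by (auto simp: linear_operator_def)
  then obtain u where "u \<notin> closure (l2_of ` adj_dom D T)"
    using \<open>\<not> densely_defined (adj_dom D T)\<close> densely_defined_iff_closure_l2_of by blast
  then obtain w where "w \<noteq> 0" and w: "\<forall>z\<in>l2_of ` adj_dom D T. inner w z = 0"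
    using Hilbert_orthogonal_to_non_dense_subspace[OF subspace_l2_of_image[OF adj_dom]] by blast
  have "h2_inner g (coeffs w) = 0" if g: "g \<in> adj_dom D T" for g
  proof -
    have gH: "g \<in> H2"
      using adj_dom(1) g by blast
    have "Re (c * h2_inner (coeffs w) g) = 0" for c
    proof -
      have "inner w (l2_of (\<lambda>n. cnj c * g n)) = 0"
        using w adj_dom(4)[OF g] by blast
      then have "Re (h2_inner (coeffs w) (\<lambda>n. cnj c * g n)) = 0"
        using inner_l2_of[OF coeffs[of w] H2_scale[OF gH]] by (simp add: coeffs_inverse)
      then show ?thesis
        by (simp add: h2_inner_scale_right[OF coeffs gH])
    qed
    then have "h2_inner (coeffs w) g = 0"
      by (rule complex_eq_0_if_Re_mult_eq_0)
    then show ?thesis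
      using h2_inner_commute[OF gH coeffs[of w]] by simp
  qed
  then have "coeffs w = (\<lambda>n. 0)"
    using orthogonal_to_adj_dom_eq_0[OF coeffs] by blast
  then show False
    using \<open>w \<noteq> 0\<close> by (metis coeffs_inverse l2_of_zero)
qed

end

section \<open>The adjoint of a Toeplitz-type operator\<close>

locale toeplitz_operator = densely_defined_operator +
  assumes shift_in_domain: "f \<in> D \<Longrightarrow> shift f \<in> D"
    and backshift_T_shift: "f \<in> D \<Longrightarrow> backshift (T (shift f)) = T f"
    and backshift_in_domain: "f \<in> D \<Longrightarrow> f 0 = 0 \<Longrightarrow> backshift f \<in> D"
begin

lemma backshift_in_adj_dom:
  assumes g: "g \<in> adj_dom D T" and "g 0 = 0"
  shows "backshift g \<in> adj_dom D T"
proof -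
  have "h2_inner (T f) (backshift g) = h2_inner f (backshift (adj D T g))" if f: "f \<in> D" for f
  proof -
    have "h2_inner (T f) (backshift g) = h2_inner (backshift (T (shift f))) (backshift g)"
      using f by (simp add: backshift_T_shift)
    also have "\<dots> = h2_inner (T (shift f)) (shift (backshift g))"
      using f g by (simp add: h2_inner_shift_right image_in_H2 shift_in_domain H2_backshift adjD)
    also have "\<dots> = h2_inner (shift f) (adj D T g)"
      using \<open>g 0 = 0\<close> adjD(3)[OF g shift_in_domain[OF f]] by (simp add: shift_backshift)
    also have "\<dots> = h2_inner f (backshift (adj D T g))"
      using f g by (simp add: h2_inner_shift_left domain_in_H2 adjD)
    finally show ?thesis .
  qed
  then show ?thesis
    using adjI(1) H2_backshift adjD(1,2)[OF g] by blast
qed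

lemma adj_inner_shift_if_coeff_0_eq_0:
  assumes g: "g \<in> adj_dom D T" and f: "f \<in> D" "f 0 = 0"
  shows "h2_inner (T f) (shift g) = h2_inner f (shift (adj D T g))"
proof -
  define f1 where "f1 = backshift f"
  have f1: "f1 \<in> D" "shift f1 = f"
    using f by (simp_all add: f1_def backshift_in_domain shift_backshift)
  have "h2_inner (T f) (shift g) = h2_inner (backshift (T f)) g"
    using f g by (simp add: h2_inner_shift_right image_in_H2 adjD)
  also have "backshift (T f) = T f1"
    using backshift_T_shift[OF f1(1)] f1(2) by simp
  also have "h2_inner (T f1) g = h2_inner f1 (adj D T g)"
    by (rule adjD(3)[OF g f1(1)])
  also have "\<dots> = h2_inner (shift f1) (shift (adj D T g))"
    using f1(1) g by (simp add: h2_inner_shift_left domain_in_H2 adjD H2_shift)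
  finally show ?thesis
    by (simp add: f1(2))
qed

text \<open>On \<open>{f \<in> D. f 0 = 0}\<close> the functional \<open>f \<mapsto> h2_inner (T f) (shift g)\<close> is represented by
  \<open>shift (adj D T g)\<close>; since this subspace has codimension one in \<open>D\<close>, a multiple of the
  constant \<open>1\<close> corrects the representative on all of \<open>D\<close>.\<close>
lemma adj_shift:
  assumes g: "g \<in> adj_dom D T"
  obtains c where "shift g \<in> adj_dom D T"
    "adj D T (shift g) = (\<lambda>n. shift (adj D T g) n + (if n = 0 then c else 0))"
proof -
  define h where "h = adj D T g"
  have gH: "g \<in> H2" and hH: "h \<in> H2"
    using adjD[OF g] by (simp_all add: h_def)
  obtain f0 where f0: "f0 \<in> D" "f0 0 = 1"
    using exists_domain_coeff_0_eq_1 by blast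
  define c where "c = cnj (h2_inner (T f0) (shift g) - h2_inner f0 (shift h))"
  have "h2_inner (T f) (shift g) = h2_inner f (\<lambda>n. shift h n + (if n = 0 then c else 0))"
    if f: "f \<in> D" for f
  proof -
    define r where "r = (\<lambda>n. f n + (- f 0) * f0 n)"
    have r: "r \<in> D" "r 0 = 0"
      unfolding r_def by (intro add_in_domain scale_in_domain f f0(1)) (simp_all add: f0(2))
    have f_eq: "f = (\<lambda>n. r n + f 0 * f0 n)"
      by (simp add: r_def)
    have "h2_inner (T f) (shift g) = h2_inner (T r) (shift g) + f 0 * h2_inner (T f0) (shift g)"
      using r(1) f0(1) gH
      by (subst f_eq) (simp add: T_add T_scale scale_in_domain h2_inner_add_left
          h2_inner_scale_left H2_scale H2_shift image_in_H2)
    also have "h2_inner (T r) (shift g) = h2_inner r (shift h)"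
      using adj_inner_shift_if_coeff_0_eq_0[OF g r] by (simp add: h_def)
    also have "h2_inner r (shift h) = h2_inner f (shift h) - f 0 * h2_inner f0 (shift h)"
      using r(1) f0(1) hH
      by (subst (1) f_eq) (simp add: h2_inner_add_left h2_inner_scale_left H2_scale H2_shift domain_in_H2)
    finally show ?thesis
      using f hH by (simp add: c_def h2_inner_add_right h2_inner_single_0_right H2_shift H2_single_0
          domain_in_H2 algebra_simps)
  qed
  then have "\<forall>f\<in>D. h2_inner (T f) (shift g) = h2_inner f (\<lambda>n. shift h n + (if n = 0 then c else 0))"
    by blast
  from adjI[OF H2_shift[OF gH] H2_add[OF H2_shift[OF hH] H2_single_0[of c]] this]
  show ?thesis
    unfolding h_def by (rule that)
qed

lemma shift_in_adj_dom: "g \<in> adj_dom D T \<Longrightarrow> shift g \<in> adj_dom D T"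
  by (erule adj_shift)

lemma backshift_adj_shift:
  assumes "g \<in> adj_dom D T"
  shows "backshift (adj D T (shift g)) = adj D T g"
proof -
  obtain c where "adj D T (shift g) = (\<lambda>n. shift (adj D T g) n + (if n = 0 then c else 0))"
    using adj_shift[OF assms] by blast
  then show ?thesis
    by (simp add: backshift_def shift_def)
qed

end

lemma sarason_toeplitz_iff:
  "sarason_toeplitz D T \<longleftrightarrow> closed_densely_defined_operator D T \<and> toeplitz_operator D T"
  by (auto simp: sarason_toeplitz_def closed_densely_defined_operator_def densely_defined_operator_def
      closed_densely_defined_operator_axioms_def toeplitz_operator_def toeplitz_operator_axioms_def)

theorem proposition1:
  assumes "sarason_toeplitz D T"
  shows "sarason_toeplitz (adj_dom D T) (adj D T)"
proof -
  interpret closed_densely_defined_operator D T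
    using assms by (simp add: sarason_toeplitz_iff)
  interpret toeplitz_operator D T
    using assms by (simp add: sarason_toeplitz_iff)
  show ?thesis
    unfolding sarason_toeplitz_def
    using linear_operator_adj densely_defined_adj closed_operator_adj shift_in_adj_dom
      backshift_adj_shift backshift_in_adj_dom by blast
qed

end
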